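(* Suppose $\mathcal X$ is convex and $x\mapsto\ell(x,i)$ is convex for each $i\in\Sigma$. Let $\mathbb Q\in\mathcal P$ and $\alpha>0$ satisfy $\sqrt{2\alpha}\le\min_{i\in\Sigma}\mathbb Q(i)\cdot\min_{i\in\Sigma}\min(\mathbb Q(i),1-\mathbb Q(i))$. Then $x\mapsto c(x,\mathbb Q)+\sqrt{2\alpha\,\mathrm{Var}_{\mathbb Q}(\ell(x,\xi))}$ is convex on $\mathcal X$. (In particular this applies with $\mathbb Q=\hat{\mathbb P}_T$ and $\alpha=a_T/T$.)
   Context: $\Sigma=\{1,\dots,d\}$ ($d\ge2$) finite, $\mathcal P$ the probability simplex; $\mathcal X\subset\mathbb R^n$ compact; $\ell:\mathcal X\times\Sigma\to\mathbb R$. $c(x,\mathbb Q)=\sum_i\ell(x,i)\mathbb Q(i)$ and $\mathrm{Var}_{\mathbb Q}(\ell(x,\xi))=\sum_i\mathbb Q(i)(\ell(x,i)-c(x,\mathbb Q))^2$. $\hat{\mathbb P}_T$ denotes the empirical distribution of $T$ observed samples and $(a_T)$ a positive sequence. *)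

theory Defs
  imports "HOL-Analysis.Analysis"
begin

text \<open>Sigma = {1..d}; distributions are functions nat => real restricted to {1..d}.\<close>

definition prob_simplex :: "nat \<Rightarrow> (nat \<Rightarrow> real) set" where
  "prob_simplex d = {Q. (\<forall>i\<in>{1..d}. 0 \<le> Q i) \<and> (\<Sum>i\<in>{1..d}. Q i) = 1}"

definition cost :: "nat \<Rightarrow> ('a \<Rightarrow> nat \<Rightarrow> real) \<Rightarrow> 'a \<Rightarrow> (nat \<Rightarrow> real) \<Rightarrow> real" where
  "cost d l x Q = (\<Sum>i\<in>{1..d}. l x i * Q i)"

definition variance_Q :: "nat \<Rightarrow> ('a \<Rightarrow> nat \<Rightarrow> real) \<Rightarrow> 'a \<Rightarrow> (nat \<Rightarrow> real) \<Rightarrow> real" where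
  "variance_Q d l x Q = (\<Sum>i\<in>{1..d}. Q i * (l x i - cost d l x Q)\<^sup>2)"

end

theory Submission
  imports Defs
begin

text \<open>Write \<open>G(y) = E\<^sub>Q y + \<beta> \<sigma>\<^sub>Q y\<close> with \<open>\<beta> = sqrt (2 \<alpha>)\<close>, so that the objective is
  \<open>G (\<ell>(x, \<cdot>))\<close>. The mean is linear and the standard deviation \<open>\<sigma>\<^sub>Q\<close> is a seminorm, so \<open>G\<close> is
  convex. The hypothesis on \<open>\<alpha>\<close> forces \<open>\<beta>\<^sup>2 \<le> Q i\<close> for all \<open>i\<close>, and then for \<open>\<delta> \<ge> 0\<close> the
  standard deviation is dominated by the mean: \<open>\<beta> \<sigma>\<^sub>Q \<delta> \<le> E\<^sub>Q \<delta>\<close>. Together with subadditivity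
  of \<open>\<sigma>\<^sub>Q\<close> this makes \<open>G\<close> monotone for the pointwise order, and a monotone convex function
  of componentwise convex functions is convex.\<close>

definition expect_Q :: "nat \<Rightarrow> (nat \<Rightarrow> real) \<Rightarrow> (nat \<Rightarrow> real) \<Rightarrow> real" where
  "expect_Q d Q y = (\<Sum>i\<in>{1..d}. y i * Q i)"

definition stddev_Q :: "nat \<Rightarrow> (nat \<Rightarrow> real) \<Rightarrow> (nat \<Rightarrow> real) \<Rightarrow> real" where
  "stddev_Q d Q y = L2_set (\<lambda>i. sqrt (Q i) * (y i - expect_Q d Q y)) {1..d}"

definition mean_stddev_Q :: "nat \<Rightarrow> (nat \<Rightarrow> real) \<Rightarrow> real \<Rightarrow> (nat \<Rightarrow> real) \<Rightarrow> real" where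
  "mean_stddev_Q d Q \<beta> y = expect_Q d Q y + \<beta> * stddev_Q d Q y"

lemma expect_Q_add: "expect_Q d Q (\<lambda>i. p i + r i) = expect_Q d Q p + expect_Q d Q r"
  by (simp add: expect_Q_def sum.distrib algebra_simps)

lemma expect_Q_scale: "expect_Q d Q (\<lambda>i. c * p i) = c * expect_Q d Q p"
  by (simp add: expect_Q_def sum_distrib_left algebra_simps)

lemma expect_Q_diff: "expect_Q d Q (\<lambda>i. p i - r i) = expect_Q d Q p - expect_Q d Q r"
  by (simp add: expect_Q_def sum_subtractf algebra_simps)

lemma sqrt_variance_Q:
  assumes "\<forall>i\<in>{1..d}. 0 \<le> Q i"
  shows "sqrt (variance_Q d l x Q) = stddev_Q d Q (l x)"
proof -
  have "cost d l x Q = expect_Q d Q (l x)"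
    by (simp add: cost_def expect_Q_def)
  then show ?thesis
    using assms unfolding variance_Q_def stddev_Q_def L2_set_def
    by (auto simp: power_mult_distrib intro!: arg_cong[where f = sqrt] sum.cong)
qed

lemma stddev_Q_add: "stddev_Q d Q (\<lambda>i. p i + r i) \<le> stddev_Q d Q p + stddev_Q d Q r"
proof -
  have "stddev_Q d Q (\<lambda>i. p i + r i) = L2_set (\<lambda>i. sqrt (Q i) * (p i - expect_Q d Q p)
          + sqrt (Q i) * (r i - expect_Q d Q r)) {1..d}"
    unfolding stddev_Q_def expect_Q_add by (rule L2_set_cong) (auto simp: algebra_simps)
  also have "\<dots> \<le> stddev_Q d Q p + stddev_Q d Q r"
    unfolding stddev_Q_def by (rule L2_set_triangle_ineq)
  finally show ?thesis .
qed

lemma stddev_Q_scale: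
  assumes "0 \<le> c"
  shows "stddev_Q d Q (\<lambda>i. c * p i) = c * stddev_Q d Q p"
  unfolding stddev_Q_def expect_Q_scale L2_set_right_distrib[OF assms]
  by (rule L2_set_cong) (auto simp: algebra_simps)

lemma stddev_Q_uminus: "stddev_Q d Q (\<lambda>i. - p i) = stddev_Q d Q p"
  using expect_Q_scale[of d Q "-1" p] unfolding stddev_Q_def L2_set_def
  by (simp add: power2_eq_square algebra_simps)

lemma stddev_Q_convex:
  assumes "0 \<le> u" "u \<le> 1"
  shows "stddev_Q d Q (\<lambda>i. (1 - u) * p i + u * r i)
           \<le> (1 - u) * stddev_Q d Q p + u * stddev_Q d Q r"
  using stddev_Q_add[of d Q "\<lambda>i. (1 - u) * p i" "\<lambda>i. u * r i"] assms
  by (simp add: stddev_Q_scale)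

lemma stddev_Q_le_sub: "stddev_Q d Q a \<le> stddev_Q d Q b + stddev_Q d Q (\<lambda>i. b i - a i)"
  using stddev_Q_add[of d Q b "\<lambda>i. a i - b i"] stddev_Q_uminus[of d Q "\<lambda>i. b i - a i"]
  by simp

text \<open>The variance is at most the second moment, since it equals the second moment minus the
  squared mean.\<close>
lemma stddev_Q_le_second_moment:
  assumes Q_nonneg: "\<forall>i\<in>{1..d}. 0 \<le> Q i" and Q_sum: "(\<Sum>i\<in>{1..d}. Q i) = 1"
  shows "stddev_Q d Q y \<le> L2_set (\<lambda>i. sqrt (Q i) * y i) {1..d}"
proof -
  define m where "m = expect_Q d Q y"
  have "(\<Sum>i\<in>{1..d}. (sqrt (Q i) * (y i - m))\<^sup>2) = (\<Sum>i\<in>{1..d}. Q i * (y i - m)\<^sup>2)"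
    using Q_nonneg by (simp add: power_mult_distrib)
  also have "\<dots> = (\<Sum>i\<in>{1..d}. Q i * (y i)\<^sup>2) - 2 * m * (\<Sum>i\<in>{1..d}. y i * Q i)
                   + m\<^sup>2 * (\<Sum>i\<in>{1..d}. Q i)"
    by (simp add: power2_diff algebra_simps sum.distrib sum_subtractf sum_distrib_left)
  also have "\<dots> = (\<Sum>i\<in>{1..d}. Q i * (y i)\<^sup>2) - m\<^sup>2"
    using Q_sum by (simp add: m_def expect_Q_def power2_eq_square)
  also have "\<dots> \<le> (\<Sum>i\<in>{1..d}. (sqrt (Q i) * y i)\<^sup>2)"
    using Q_nonneg by (simp add: power_mult_distrib)
  finally show ?thesis
    unfolding stddev_Q_def L2_set_def m_def[symmetric] by simp
qed

lemma stddev_Q_le_expect: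
  assumes Q_nonneg: "\<forall>i\<in>{1..d}. 0 \<le> Q i" and Q_sum: "(\<Sum>i\<in>{1..d}. Q i) = 1"
    and "0 \<le> \<beta>" and \<beta>_le: "\<forall>i\<in>{1..d}. \<beta>\<^sup>2 \<le> Q i"
    and \<delta>_nonneg: "\<forall>i\<in>{1..d}. 0 \<le> \<delta> i"
  shows "\<beta> * stddev_Q d Q \<delta> \<le> expect_Q d Q \<delta>"
proof -
  have "\<beta> * stddev_Q d Q \<delta> \<le> \<beta> * L2_set (\<lambda>i. sqrt (Q i) * \<delta> i) {1..d}"
    using stddev_Q_le_second_moment[OF Q_nonneg Q_sum] \<open>0 \<le> \<beta>\<close> by (rule mult_left_mono)
  also have "\<dots> = L2_set (\<lambda>i. \<beta> * (sqrt (Q i) * \<delta> i)) {1..d}"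
    using \<open>0 \<le> \<beta>\<close> by (rule L2_set_right_distrib)
  also have "\<dots> \<le> L2_set (\<lambda>i. \<delta> i * Q i) {1..d}"
  proof (rule L2_set_mono)
    fix i assume i: "i \<in> {1..d}"
    have "\<beta> \<le> sqrt (Q i)"
      using \<beta>_le i \<open>0 \<le> \<beta>\<close> real_le_rsqrt by blast
    have "0 \<le> Q i" using Q_nonneg i by simp
    have "\<beta> * sqrt (Q i) \<le> sqrt (Q i) * sqrt (Q i)"
      using \<open>\<beta> \<le> sqrt (Q i)\<close> by (rule mult_right_mono) (simp add: \<open>0 \<le> Q i\<close>)
    with \<open>0 \<le> Q i\<close> have "\<beta> * sqrt (Q i) \<le> Q i" by simp
    then show "\<beta> * (sqrt (Q i) * \<delta> i) \<le> \<delta> i * Q i"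
      using \<delta>_nonneg i by (metis mult.assoc mult.commute mult_left_mono)
    show "0 \<le> \<beta> * (sqrt (Q i) * \<delta> i)"
      using \<open>0 \<le> \<beta>\<close> Q_nonneg \<delta>_nonneg i by simp
  qed
  also have "\<dots> \<le> expect_Q d Q \<delta>"
    unfolding expect_Q_def using Q_nonneg \<delta>_nonneg by (intro L2_set_le_sum) simp
  finally show ?thesis .
qed

lemma mean_stddev_Q_convex:
  assumes "0 \<le> \<beta>" "0 \<le> u" "u \<le> 1"
  shows "mean_stddev_Q d Q \<beta> (\<lambda>i. (1 - u) * p i + u * r i)
           \<le> (1 - u) * mean_stddev_Q d Q \<beta> p + u * mean_stddev_Q d Q \<beta> r"
proof -
  have "\<beta> * stddev_Q d Q (\<lambda>i. (1 - u) * p i + u * r i)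
          \<le> \<beta> * ((1 - u) * stddev_Q d Q p + u * stddev_Q d Q r)"
    using stddev_Q_convex assms by (intro mult_left_mono) auto
  then show ?thesis
    unfolding mean_stddev_Q_def expect_Q_add expect_Q_scale by (simp add: algebra_simps)
qed

lemma mean_stddev_Q_mono:
  assumes "\<forall>i\<in>{1..d}. 0 \<le> Q i" "(\<Sum>i\<in>{1..d}. Q i) = 1"
    and "0 \<le> \<beta>" "\<forall>i\<in>{1..d}. \<beta>\<^sup>2 \<le> Q i"
    and "\<forall>i\<in>{1..d}. a i \<le> b i"
  shows "mean_stddev_Q d Q \<beta> a \<le> mean_stddev_Q d Q \<beta> b"
proof -
  have "\<beta> * stddev_Q d Q a \<le> \<beta> * stddev_Q d Q b + \<beta> * stddev_Q d Q (\<lambda>i. b i - a i)"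
    using stddev_Q_le_sub \<open>0 \<le> \<beta>\<close> by (metis distrib_left mult_left_mono)
  also have "\<beta> * stddev_Q d Q (\<lambda>i. b i - a i) \<le> expect_Q d Q (\<lambda>i. b i - a i)"
    using assms by (intro stddev_Q_le_expect) auto
  finally show ?thesis
    unfolding mean_stddev_Q_def expect_Q_diff by simp
qed

lemma convex_on_monotone_comp:
  fixes l :: "'a::real_vector \<Rightarrow> 'i \<Rightarrow> real"
  assumes "convex X" and "\<forall>i\<in>I. convex_on X (\<lambda>x. l x i)"
    and mono: "\<And>a b. \<forall>i\<in>I. a i \<le> b i \<Longrightarrow> G a \<le> G b"
    and convex: "\<And>a b u. 0 \<le> u \<Longrightarrow> u \<le> 1 \<Longrightarrow>
                   G (\<lambda>i. (1 - u) * a i + u * b i) \<le> (1 - u) * G a + u * G b"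
  shows "convex_on X (\<lambda>x. G (l x))"
proof (rule convex_onI[OF _ \<open>convex X\<close>])
  fix t :: real and x y assume t: "0 < t" "t < 1" and xy: "x \<in> X" "y \<in> X"
  have "\<forall>i\<in>I. l ((1 - t) *\<^sub>R x + t *\<^sub>R y) i \<le> (1 - t) * l x i + t * l y i"
    using assms(2) t xy by (auto intro: convex_onD)
  then have "G (l ((1 - t) *\<^sub>R x + t *\<^sub>R y)) \<le> G (\<lambda>i. (1 - t) * l x i + t * l y i)"
    by (rule mono)
  also have "\<dots> \<le> (1 - t) * G (l x) + t * G (l y)"
    using t by (intro convex) auto
  finally show "G (l ((1 - t) *\<^sub>R x + t *\<^sub>R y)) \<le> (1 - t) * G (l x) + t * G (l y)" .
qed

lemma sq_le_of_le_min_product: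
  fixes Q :: "nat \<Rightarrow> real"
  assumes "d \<ge> 1" and Q_nonneg: "\<forall>i\<in>{1..d}. 0 \<le> Q i" and "0 \<le> \<beta>"
    and \<beta>_le: "\<beta> \<le> (MIN i\<in>{1..d}. Q i) * (MIN i\<in>{1..d}. min (Q i) (1 - Q i))"
    and "i \<in> {1..d}"
  shows "\<beta>\<^sup>2 \<le> Q i"
proof -
  define q where "q = (MIN i\<in>{1..d}. Q i)"
  define m where "m = (MIN i\<in>{1..d}. min (Q i) (1 - Q i))"
  have "1 \<in> {1..d}" using \<open>d \<ge> 1\<close> by simp
  have "0 \<le> q" unfolding q_def using \<open>d \<ge> 1\<close> Q_nonneg by simp
  have "q \<le> Q i" "q \<le> Q 1"
    using \<open>i \<in> {1..d}\<close> \<open>1 \<in> {1..d}\<close> unfolding q_def by simp_all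
  have "m \<le> min (Q 1) (1 - Q 1)"
    unfolding m_def by (rule Min_le) (use \<open>1 \<in> {1..d}\<close> in auto)
  have "\<beta> \<le> q * m" using \<beta>_le unfolding q_def m_def .
  show ?thesis
  proof (cases "m \<le> 0")
    case True
    then have "\<beta> = 0"
      using \<open>\<beta> \<le> q * m\<close> \<open>0 \<le> q\<close> \<open>0 \<le> \<beta>\<close> by (smt (verit) mult_nonneg_nonpos)
    then show ?thesis using Q_nonneg \<open>i \<in> {1..d}\<close> by simp
  next
    case False
    then have "q \<le> 1" "m \<le> 1"
      using \<open>q \<le> Q 1\<close> \<open>m \<le> min (Q 1) (1 - Q 1)\<close> by linarith+
    then have "\<beta> \<le> q"
      using \<open>\<beta> \<le> q * m\<close> \<open>0 \<le> q\<close> by (smt (verit) mult_left_le)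
    then have "\<beta>\<^sup>2 \<le> q * q"
      unfolding power2_eq_square using \<open>0 \<le> \<beta>\<close> by (intro mult_mono) auto
    also have "\<dots> \<le> q" using \<open>0 \<le> q\<close> \<open>q \<le> 1\<close> by (simp add: mult_left_le)
    finally show ?thesis using \<open>q \<le> Q i\<close> by simp
  qed
qed

theorem mainTheorem15:
  fixes d :: nat and X :: "'a::euclidean_space set"
    and l :: "'a \<Rightarrow> nat \<Rightarrow> real" and Q :: "nat \<Rightarrow> real" and \<alpha> :: real
  assumes "d \<ge> 2"
    and "compact X" and "convex X"
    and "\<forall>i\<in>{1..d}. convex_on X (\<lambda>x. l x i)"
    and "Q \<in> prob_simplex d"
    and "\<alpha> > 0"
    and "sqrt (2 * \<alpha>) \<le> (MIN i\<in>{1..d}. Q i) * (MIN i\<in>{1..d}. min (Q i) (1 - Q i))"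
  shows "convex_on X (\<lambda>x. cost d l x Q + sqrt (2 * \<alpha> * variance_Q d l x Q))"
proof -
  define \<beta> where "\<beta> = sqrt (2 * \<alpha>)"
  have Q_nonneg: "\<forall>i\<in>{1..d}. 0 \<le> Q i" and Q_sum: "(\<Sum>i\<in>{1..d}. Q i) = 1"
    using assms(5) by (auto simp: prob_simplex_def)
  have "0 \<le> \<beta>" unfolding \<beta>_def using assms(6) by simp
  have \<beta>_le: "\<forall>i\<in>{1..d}. \<beta>\<^sup>2 \<le> Q i"
    using sq_le_of_le_min_product[OF _ Q_nonneg \<open>0 \<le> \<beta>\<close>] assms(1,7) \<beta>_def by auto
  have objective: "cost d l x Q + sqrt (2 * \<alpha> * variance_Q d l x Q)
                     = mean_stddev_Q d Q \<beta> (l x)" for x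
    unfolding \<beta>_def mean_stddev_Q_def real_sqrt_mult sqrt_variance_Q[OF Q_nonneg]
    by (simp add: cost_def expect_Q_def)
  show ?thesis
    unfolding objective
    using assms(3,4) mean_stddev_Q_mono[OF Q_nonneg Q_sum \<open>0 \<le> \<beta>\<close> \<beta>_le]
      mean_stddev_Q_convex[OF \<open>0 \<le> \<beta>\<close>]
    by (rule convex_on_monotone_comp)
qed

end
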